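(* Suppose $N$ acts locally freely on $\mu^{-1}(0)$. Then condition (S) holds (i.e. at no point $p\in\mu^{-1}(0)$ is there a nonzero $(X_1,X_2,X_3)\in\mathfrak n^3$ with $(IX_1+SX_2+TX_3)_p=0$) if and only if, for every $(a,b)\in K$, the real-linear map $\Lambda_{(a,b)}\colon \mathfrak n_{L,J}\otimes(\mathbb R\times\mathbb C)\to\mathbb C^{L\setminus J}$, $(\theta^{(1)},\theta^{(c)})\mapsto (b_k\theta^{(1)}_k+a_k\theta^{(c)}_k)_{k\in L\setminus J}$, is injective, where $J=J(a,b)$, $L=L(a,b)$.
   Context: Setting: $\mathbb C^{d,d}=\mathbb C^d\times\mathbb C^d$ with coordinates $(z,w)$, $g=\mathrm{Re}\sum_k(dz_k\,d\bar z_k-dw_k\,d\bar w_k)$, $I(z,w)=(iz,-iw)$, $S(z,w)=(w,z)$, $T=IS$; $\mathbb T^d$ acts by $(z_k,w_k)\mapsto(e^{i\theta_k}z_k,e^{i\theta_k}w_k)$, and elements of $\mathfrak n\subset\mathbb R^d$ are identified with induced vector fields. Fix $u_1,\dots,u_d\in\mathbb Z^n$ spanning $\mathbb R^n$; $\beta\colon\mathbb R^d\to\mathbb R^n$, $e_k\mapsto u_k$; $\mathfrak n=\ker\beta$ with inclusion $\iota$; $N\subset\mathbb T^d$ the kernel of the induced map $\mathbb T^d\to\mathbb T^n$. Identify $\mathbb R^d$ with its dual via the standard inner product. Fix real $\lambda^{(j)}_k$, $\lambda^{(c)}_k=\lambda^{(2)}_k+i\lambda^{(3)}_k$; $\mu_I(z,w)=\sum_k(\tfrac12(|z_k|^2+|w_k|^2)+\lambda^{(1)}_k)\iota^*e_k$,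 $(\mu_S+i\mu_T)(z,w)=\sum_k(iz_k\bar w_k+\lambda^{(c)}_k)\iota^*e_k$. For $(a,b)\in\mathbb R^n\times\mathbb C^n$: $a_k=\langle a,u_k\rangle-\lambda^{(1)}_k$, $b_k=\langle b,u_k\rangle-\lambda^{(c)}_k$; $K=\{(a,b):a_k\geqslant|b_k|\ \forall k\}$; $V_k=\{a_k=0=b_k\}$, $W_k=\{a_k=|b_k|\}$; $J(a,b)=\{k:(a,b)\in V_k\}$, $L(a,b)=\{k:(a,b)\in W_k\}$ (so $J\subset L$). For $A\subset\{1,\dots,d\}$ let $\mathbb R_A=\mathrm{span}\{e_k:k\in A\}$ and $A'$ its complement. Let $\mathfrak n_L=\mathfrak n\cap\mathbb R_L$ and $\mathfrak n_{L,J}\subset\mathbb R_{L\setminus J}$ the image of $\mathfrak n_L$ under orthogonal projection to $\mathbb R_{J'}$. An element of $\mathfrak n_{L,J}\otimes(\mathbb R\times\mathbb C)$ is written $(\theta^{(1)},\theta^{(c)})$ with $\theta^{(1)}\in\mathfrak n_{L,J}$, $\theta^{(c)}=\theta^{(2)}+i\theta^{(3)}$, $\theta^{(2)},\theta^{(3)}\in\mathfrak n_{L,J}$, with components $\theta^{(\cdot)}_k$. *)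

theory Defs
  imports "HOL-Analysis.Analysis"
begin

text \<open>The weights u_k are given as u :: 'd => real^'n (integrality is an assumption of the theorem).
  lam1, lam2, lam3 are the real parameters lambda^(1), lambda^(2), lambda^(3).\<close>

type_synonym 'd pt = "(complex^'d) \<times> (complex^'d)"

definition nfrak :: "('d::finite \<Rightarrow> real^'n::finite) \<Rightarrow> (real^'d) set" where
  "nfrak u = {X. (\<Sum>k\<in>UNIV. X$k *\<^sub>R u k) = 0}"

text \<open>Vector field induced by X in R^d (derivative of the torus action) at p.\<close>
definition vf :: "real^'d::finite \<Rightarrow> 'd pt \<Rightarrow> 'd pt" where
  "vf X p = ((\<chi> k. \<i> * of_real (X$k) * (fst p $ k)), (\<chi> k. \<i> * of_real (X$k) * (snd p $ k)))"

definition Iop :: "'d::finite pt \<Rightarrow> 'd pt" where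
  "Iop p = ((\<chi> k. \<i> * (fst p $ k)), (\<chi> k. - \<i> * (snd p $ k)))"

definition Sop :: "'d::finite pt \<Rightarrow> 'd pt" where
  "Sop p = (snd p, fst p)"

definition Top :: "'d::finite pt \<Rightarrow> 'd pt" where
  "Top p = Iop (Sop p)"

text \<open>p lies in mu^{-1}(0): mu_I(p) = 0 and (mu_S + i mu_T)(p) = 0 as elements of (the complexified)
  dual of n; iota^* e_k is the functional X |-> X_k.\<close>
definition mu_zero :: "('d::finite \<Rightarrow> real^'n::finite) \<Rightarrow> ('d \<Rightarrow> real) \<Rightarrow> ('d \<Rightarrow> real) \<Rightarrow> ('d \<Rightarrow> real)
    \<Rightarrow> 'd pt \<Rightarrow> bool" where
  "mu_zero u lam1 lam2 lam3 p \<longleftrightarrow>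
     (\<forall>X\<in>nfrak u. (\<Sum>k\<in>UNIV. ((cmod (fst p $ k))\<^sup>2 / 2 + (cmod (snd p $ k))\<^sup>2 / 2 + lam1 k) * X$k) = 0) \<and>
     (\<forall>X\<in>nfrak u. (\<Sum>k\<in>UNIV. (\<i> * (fst p $ k) * cnj (snd p $ k) + Complex (lam2 k) (lam3 k))
                                 * of_real (X$k)) = 0)"

definition locally_free :: "('d::finite \<Rightarrow> real^'n::finite) \<Rightarrow> ('d \<Rightarrow> real) \<Rightarrow> ('d \<Rightarrow> real) \<Rightarrow> ('d \<Rightarrow> real) \<Rightarrow> bool" where
  "locally_free u lam1 lam2 lam3 \<longleftrightarrow>
     (\<forall>p. mu_zero u lam1 lam2 lam3 p \<longrightarrow> (\<forall>X\<in>nfrak u. vf X p = 0 \<longrightarrow> X = 0))"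

definition condS :: "('d::finite \<Rightarrow> real^'n::finite) \<Rightarrow> ('d \<Rightarrow> real) \<Rightarrow> ('d \<Rightarrow> real) \<Rightarrow> ('d \<Rightarrow> real) \<Rightarrow> bool" where
  "condS u lam1 lam2 lam3 \<longleftrightarrow>
     \<not> (\<exists>p. mu_zero u lam1 lam2 lam3 p \<and>
          (\<exists>X1\<in>nfrak u. \<exists>X2\<in>nfrak u. \<exists>X3\<in>nfrak u. (X1, X2, X3) \<noteq> (0, 0, 0) \<and>
              Iop (vf X1 p) + Sop (vf X2 p) + Top (vf X3 p) = 0))"

definition acoord :: "('d::finite \<Rightarrow> real^'n::finite) \<Rightarrow> ('d \<Rightarrow> real) \<Rightarrow> real^'n \<Rightarrow> 'd \<Rightarrow> real" where
  "acoord u lam1 a k = a \<bullet> u k - lam1 k"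

definition bcoord :: "('d::finite \<Rightarrow> real^'n::finite) \<Rightarrow> ('d \<Rightarrow> real) \<Rightarrow> ('d \<Rightarrow> real) \<Rightarrow> complex^'n \<Rightarrow> 'd \<Rightarrow> complex" where
  "bcoord u lam2 lam3 b k = (\<Sum>j\<in>UNIV. b$j * of_real (u k $ j)) - Complex (lam2 k) (lam3 k)"

definition Kset :: "('d::finite \<Rightarrow> real^'n::finite) \<Rightarrow> ('d \<Rightarrow> real) \<Rightarrow> ('d \<Rightarrow> real) \<Rightarrow> ('d \<Rightarrow> real)
    \<Rightarrow> ((real^'n) \<times> (complex^'n)) set" where
  "Kset u lam1 lam2 lam3 = {(a, b). \<forall>k. acoord u lam1 a k \<ge> cmod (bcoord u lam2 lam3 b k)}"

definition Jset :: "('d::finite \<Rightarrow> real^'n::finite) \<Rightarrow> ('d \<Rightarrow> real) \<Rightarrow> ('d \<Rightarrow> real) \<Rightarrow> ('d \<Rightarrow> real)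
    \<Rightarrow> real^'n \<Rightarrow> complex^'n \<Rightarrow> 'd set" where
  "Jset u lam1 lam2 lam3 a b = {k. acoord u lam1 a k = 0 \<and> bcoord u lam2 lam3 b k = 0}"

definition Lset :: "('d::finite \<Rightarrow> real^'n::finite) \<Rightarrow> ('d \<Rightarrow> real) \<Rightarrow> ('d \<Rightarrow> real) \<Rightarrow> ('d \<Rightarrow> real)
    \<Rightarrow> real^'n \<Rightarrow> complex^'n \<Rightarrow> 'd set" where
  "Lset u lam1 lam2 lam3 a b = {k. acoord u lam1 a k = cmod (bcoord u lam2 lam3 b k)}"

definition nL :: "('d::finite \<Rightarrow> real^'n::finite) \<Rightarrow> 'd set \<Rightarrow> (real^'d) set" where
  "nL u L = {X \<in> nfrak u. \<forall>k. k \<notin> L \<longrightarrow> X$k = 0}"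

definition projR :: "'d::finite set \<Rightarrow> real^'d \<Rightarrow> real^'d" where
  "projR A X = (\<chi> k. if k \<in> A then X$k else 0)"

definition nLJ :: "('d::finite \<Rightarrow> real^'n::finite) \<Rightarrow> 'd set \<Rightarrow> 'd set \<Rightarrow> (real^'d) set" where
  "nLJ u L J = projR (- J) ` nL u L"

text \<open>Lambda_{(a,b)}: an element (theta1, theta2 + i theta3) of n_{L,J} \<otimes> (R \<times> C) is given by the
  triple (theta1, theta2, theta3) in n_{L,J}^3; the value is an element of C^{L-J}.\<close>
definition Lambda :: "('d::finite \<Rightarrow> real^'n::finite) \<Rightarrow> ('d \<Rightarrow> real) \<Rightarrow> ('d \<Rightarrow> real) \<Rightarrow> ('d \<Rightarrow> real)
    \<Rightarrow> real^'n \<Rightarrow> complex^'n \<Rightarrow> (real^'d) \<times> (real^'d) \<times> (real^'d) \<Rightarrow> ('d \<Rightarrow> complex)" where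
  "Lambda u lam1 lam2 lam3 a b =
     (\<lambda>(t1, t2, t3). restrict
        (\<lambda>k. bcoord u lam2 lam3 b k * of_real (t1$k) + of_real (acoord u lam1 a k) * Complex (t2$k) (t3$k))
        (Lset u lam1 lam2 lam3 a b - Jset u lam1 lam2 lam3 a b))"

definition Lambda_dom :: "('d::finite \<Rightarrow> real^'n::finite) \<Rightarrow> ('d \<Rightarrow> real) \<Rightarrow> ('d \<Rightarrow> real) \<Rightarrow> ('d \<Rightarrow> real)
    \<Rightarrow> real^'n \<Rightarrow> complex^'n \<Rightarrow> ((real^'d) \<times> (real^'d) \<times> (real^'d)) set" where
  "Lambda_dom u lam1 lam2 lam3 a b =
     (let V = nLJ u (Lset u lam1 lam2 lam3 a b) (Jset u lam1 lam2 lam3 a b) in V \<times> V \<times> V)"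

end

theory Submission
  imports Defs
begin

text \<open>Coordinatewise, the hyperkaehler moment map of C^{d,d} sends (z_k, w_k) to
  a_k = (|z_k|^2 + |w_k|^2)/2 and b_k = i z_k conj(w_k); since the annihilator of n is the
  image of the transpose of beta, a point lies in mu^{-1}(0) exactly when these values are the
  coordinates of some (a, b), and this (a, b) then lies in K, every point of K being attained.
  At such a point the equation I X_1 + S X_2 + T X_3 = 0 splits into one equation per
  coordinate k: it forces X_k = 0 when |z_k| <> |w_k| (k not in L), it is void when
  z_k = w_k = 0 (k in J), and for k in L - J it is equivalent to
  b_k X_{1,k} + a_k (X_{2,k} + i X_{3,k}) = 0. So the solutions in n^3 are the triples in n_L^3
  whose projection to R_{J'} lies in the kernel of Lambda_(a,b). The projection only forgets
  coordinates in J, along which n acts trivially at the point, so by local freeness it is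
  injective on solutions.\<close>

definition IST_coord_eq :: "real \<Rightarrow> real \<Rightarrow> real \<Rightarrow> complex \<Rightarrow> complex \<Rightarrow> bool" where
  "IST_coord_eq x1 x2 x3 z w \<longleftrightarrow>
     - of_real x1 * z + \<i> * of_real x2 * w - of_real x3 * w = 0 \<and>
     of_real x1 * w + \<i> * of_real x2 * z + of_real x3 * z = 0"

lemma IST_vf_eq_0_iff:
  "Iop (vf X1 p) + Sop (vf X2 p) + Top (vf X3 p) = 0 \<longleftrightarrow>
   (\<forall>k. IST_coord_eq (X1$k) (X2$k) (X3$k) (fst p $ k) (snd p $ k))"
  unfolding IST_coord_eq_def Iop_def Sop_def Top_def vf_def
  by (auto simp: prod_eq_iff vec_eq_iff algebra_simps)

lemma IST_coord_eq_0_0: "IST_coord_eq x1 x2 x3 0 0"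
  unfolding IST_coord_eq_def by simp

lemma IST_coord_eq_norm_neq:
  assumes "cmod z \<noteq> cmod w" and "IST_coord_eq x1 x2 x3 z w"
  shows "x1 = 0 \<and> x2 = 0 \<and> x3 = 0"
proof -
  define r where "r = cmod (Complex x3 x2)"
  have "of_real x1 * z = (\<i> * of_real x2 - of_real x3) * w"
    and "of_real x1 * w = - ((\<i> * of_real x2 + of_real x3) * z)"
    using assms(2) unfolding IST_coord_eq_def eq_neg_iff_add_eq_0 by (auto simp: algebra_simps)
  moreover have "cmod (\<i> * of_real x2 - of_real x3) = r" "cmod (\<i> * of_real x2 + of_real x3) = r"
    unfolding r_def cmod_def by simp_all
  ultimately have "\<bar>x1\<bar> * cmod z = r * cmod w" "\<bar>x1\<bar> * cmod w = r * cmod z"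
    by (metis norm_minus_cancel norm_mult norm_of_real)+
  then have "(\<bar>x1\<bar> + r) * (cmod z - cmod w) = 0"
    by (simp add: algebra_simps)
  with assms(1) have "\<bar>x1\<bar> + r = 0"
    by simp
  moreover have "r \<ge> 0"
    unfolding r_def by simp
  ultimately have "x1 = 0" "r = 0"
    by auto
  then show ?thesis
    unfolding r_def by (auto simp: complex_eq_iff)
qed

lemma IST_coord_eq_norm_eq_iff:
  assumes norms: "cmod z = cmod w"
  shows "IST_coord_eq x1 x2 x3 z w \<longleftrightarrow>
    of_real x1 * (\<i> * z * cnj w) + of_real ((cmod z)\<^sup>2 / 2 + (cmod w)\<^sup>2 / 2) * Complex x2 x3 = 0"
    (is "_ \<longleftrightarrow> ?E = 0")
proof (cases "w = 0")
  case True
  with norms show ?thesis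
    by (simp add: IST_coord_eq_def)
next
  case False
  with norms have "z \<noteq> 0"
    by auto
  \<comment> \<open>multiplied by conj w and conj z, the two real-linear equations become ?E and its conjugate\<close>
  have "(cmod z)\<^sup>2 / 2 + (cmod w)\<^sup>2 / 2 = (cmod w)\<^sup>2" "(cmod z)\<^sup>2 / 2 + (cmod w)\<^sup>2 / 2 = (cmod z)\<^sup>2"
    using norms by simp_all
  moreover have
    "cnj w * (- of_real x1 * z + \<i> * of_real x2 * w - of_real x3 * w) =
       \<i> * (of_real x1 * (\<i> * z * cnj w) + of_real ((cmod w)\<^sup>2) * Complex x2 x3)"
    "cnj z * (of_real x1 * w + \<i> * of_real x2 * z + of_real x3 * z) =
       \<i> * cnj (of_real x1 * (\<i> * z * cnj w) + of_real ((cmod z)\<^sup>2) * Complex x2 x3)"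
    by (simp_all add: complex_eq_iff algebra_simps power2_eq_square cmod_def)
  ultimately have
    "cnj w * (- of_real x1 * z + \<i> * of_real x2 * w - of_real x3 * w) = \<i> * ?E"
    "cnj z * (of_real x1 * w + \<i> * of_real x2 * z + of_real x3 * z) = \<i> * cnj ?E"
    by simp_all
  with \<open>w \<noteq> 0\<close> \<open>z \<noteq> 0\<close> show ?thesis
    unfolding IST_coord_eq_def by (metis complex_cnj_zero_iff mult_eq_0_iff complex_i_not_zero)
qed

definition amom :: "'d::finite pt \<Rightarrow> 'd \<Rightarrow> real" where
  "amom p k = (cmod (fst p $ k))\<^sup>2 / 2 + (cmod (snd p $ k))\<^sup>2 / 2"

definition bmom :: "'d::finite pt \<Rightarrow> 'd \<Rightarrow> complex" where
  "bmom p k = \<i> * fst p $ k * cnj (snd p $ k)"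

lemma amom_minus_norm_bmom: "amom p k - cmod (bmom p k) = (cmod (fst p $ k) - cmod (snd p $ k))\<^sup>2 / 2"
  unfolding amom_def bmom_def by (simp add: norm_mult power2_eq_square algebra_simps)

lemma norm_bmom_le_amom: "cmod (bmom p k) \<le> amom p k"
proof -
  have "0 \<le> (cmod (fst p $ k) - cmod (snd p $ k))\<^sup>2 / 2"
    by simp
  then show ?thesis
    using amom_minus_norm_bmom[of p k] by linarith
qed

lemma amom_eq_norm_bmom_iff: "amom p k = cmod (bmom p k) \<longleftrightarrow> cmod (fst p $ k) = cmod (snd p $ k)"
  using amom_minus_norm_bmom[of p k] by auto

lemma amom_eq_0_iff: "amom p k = 0 \<longleftrightarrow> fst p $ k = 0 \<and> snd p $ k = 0"
  unfolding amom_def by (simp add: add_nonneg_eq_0_iff)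

lemma exists_moment_preimage:
  fixes \<alpha> :: real and \<beta> :: complex
  assumes "cmod \<beta> \<le> \<alpha>"
  shows "\<exists>z w. (cmod z)\<^sup>2 / 2 + (cmod w)\<^sup>2 / 2 = \<alpha> \<and> \<i> * z * cnj w = \<beta>"
proof -
  define A where "A = sqrt (\<alpha> + cmod \<beta>)"
  define B where "B = sqrt (\<alpha> - cmod \<beta>)"
  have "0 \<le> \<alpha> + cmod \<beta>" "0 \<le> \<alpha> - cmod \<beta>"
    using assms norm_ge_zero[of \<beta>] by linarith+
  then have A2: "A\<^sup>2 = \<alpha> + cmod \<beta>" and B2: "B\<^sup>2 = \<alpha> - cmod \<beta>"
    unfolding A_def B_def by simp_all
  have "0 \<le> B" "B \<le> A"
    unfolding A_def B_def using assms by (simp_all add: real_sqrt_le_mono)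
  \<comment> \<open>the moduli r, s of z, w solve (r + s)^2 / 2 = alpha + |beta| and (r - s)^2 / 2 = alpha - |beta|\<close>
  define r where "r = (A + B) / sqrt 2"
  define s where "s = (A - B) / sqrt 2"
  have "r \<ge> 0" "s \<ge> 0"
    unfolding r_def s_def using \<open>0 \<le> B\<close> \<open>B \<le> A\<close> by auto
  have "r\<^sup>2 / 2 + s\<^sup>2 / 2 = \<alpha>" "r * s = cmod \<beta>"
    unfolding r_def s_def power_divide using A2 B2 by (simp_all add: power2_eq_square field_simps)
  define e where "e = (if \<beta> = 0 then 1 else - \<i> * \<beta> / of_real (cmod \<beta>))"
  have "cmod e = 1" "of_real (cmod \<beta>) * \<i> * e = \<beta>"
    unfolding e_def by (auto simp: norm_mult norm_divide)
  have "(cmod (of_real r * e))\<^sup>2 / 2 + (cmod (of_real s :: complex))\<^sup>2 / 2 = \<alpha>"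
    using \<open>cmod e = 1\<close> \<open>r \<ge> 0\<close> \<open>s \<ge> 0\<close> \<open>r\<^sup>2 / 2 + s\<^sup>2 / 2 = \<alpha>\<close> by (simp add: norm_mult)
  moreover have "\<i> * (of_real r * e) * cnj (of_real s) = \<beta>"
    using \<open>r * s = cmod \<beta>\<close> \<open>of_real (cmod \<beta>) * \<i> * e = \<beta>\<close>
    by (metis (no_types, lifting) complex_cnj_complex_of_real mult.commute mult.left_commute of_real_mult)
  ultimately show ?thesis
    by blast
qed

lemma orthogonal_nfrak_iff_transpose_image:
  fixes v :: "real^'d::finite" and u :: "'d \<Rightarrow> real^'n::finite"
  shows "(\<forall>X\<in>nfrak u. v \<bullet> X = 0) \<longleftrightarrow> (\<exists>a. \<forall>k. v$k = a \<bullet> u k)"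
proof
  assume "\<exists>a. \<forall>k. v$k = a \<bullet> u k"
  then obtain a where "\<And>k. v$k = a \<bullet> u k"
    by blast
  then have "v \<bullet> X = (\<Sum>k\<in>UNIV. X$k * (a \<bullet> u k))" for X
    by (simp add: inner_vec_def[of v X] mult.commute)
  also have "\<dots> X = a \<bullet> (\<Sum>k\<in>UNIV. X$k *\<^sub>R u k)" for X
    by (simp add: inner_sum_right)
  finally have "v \<bullet> X = a \<bullet> (\<Sum>k\<in>UNIV. X$k *\<^sub>R u k)" for X .
  then show "\<forall>X\<in>nfrak u. v \<bullet> X = 0"
    unfolding nfrak_def by simp
next
  assume orth: "\<forall>X\<in>nfrak u. v \<bullet> X = 0"
  define f where "f = (\<lambda>a::real^'n. \<chi> k. a \<bullet> u k)"
  have "linear f"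
    unfolding f_def by (rule linearI) (auto simp: vec_eq_iff inner_add_left)
  then have "subspace (range f)"
    by (simp add: linear_subspace_image)
  obtain y c where y: "y \<in> span (range f)" and c: "\<And>x. x \<in> span (range f) \<Longrightarrow> orthogonal c x"
    and v: "v = y + c"
    using orthogonal_subspace_decomp_exists by blast
  \<comment> \<open>f is the transpose of beta, so c being orthogonal to its image means beta c = 0\<close>
  define g where "g = (\<Sum>k\<in>UNIV. c$k *\<^sub>R u k)"
  have "orthogonal c (f g)"
    using c by (simp add: span_base)
  then have "(\<Sum>k\<in>UNIV. c$k * (g \<bullet> u k)) = 0"
    unfolding orthogonal_def inner_vec_def f_def by simp
  then have "g \<bullet> g = 0"
    unfolding g_def by (simp add: inner_sum_right inner_sum_left algebra_simps)
  then have "c \<in> nfrak u"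
    unfolding nfrak_def g_def by simp
  with orth have "v \<bullet> c = 0"
    by blast
  moreover have "y \<bullet> c = 0"
    using c[OF y] by (simp add: orthogonal_def inner_commute)
  ultimately have "c = 0"
    unfolding v by (simp add: inner_add_left)
  with y v \<open>subspace (range f)\<close> have "v \<in> range f"
    by (metis add.right_neutral span_eq_iff)
  then show "\<exists>a. \<forall>k. v$k = a \<bullet> u k"
    unfolding f_def by auto
qed

lemma subspace_nL: "subspace (nL u L)"
proof -
  have "(\<Sum>k\<in>UNIV. (c * X$k) *\<^sub>R u k) = c *\<^sub>R (\<Sum>k\<in>UNIV. X$k *\<^sub>R u k)" for c X
    by (simp add: scaleR_sum_right)
  then show ?thesis
    unfolding subspace_def nL_def nfrak_def by (simp add: scaleR_add_left sum.distrib)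
qed

lemma projR_diff: "projR A X - projR A Y = projR A (X - Y)"
  by (simp add: projR_def vec_eq_iff)

lemma bcoord_eq:
  "bcoord u lam2 lam3 b k =
     Complex ((\<chi> j. Re (b$j)) \<bullet> u k - lam2 k) ((\<chi> j. Im (b$j)) \<bullet> u k - lam3 k)"
  unfolding bcoord_def by (simp add: complex_eq_iff Re_sum Im_sum inner_vec_def mult.commute)

lemma mu_zero_iff_orthogonal:
  "mu_zero u lam1 lam2 lam3 p \<longleftrightarrow>
   (\<forall>X\<in>nfrak u. (\<chi> k. amom p k + lam1 k) \<bullet> X = 0 \<and> (\<chi> k. Re (bmom p k) + lam2 k) \<bullet> X = 0 \<and>
      (\<chi> k. Im (bmom p k) + lam3 k) \<bullet> X = 0)"
  unfolding mu_zero_def amom_def bmom_def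
  by (auto simp: complex_eq_iff Re_sum Im_sum inner_vec_def)

context
  fixes u :: "'d::finite \<Rightarrow> real^'n::finite"
    and lam1 lam2 lam3 :: "'d \<Rightarrow> real"
begin

definition lies_over :: "real^'n \<Rightarrow> complex^'n \<Rightarrow> 'd pt \<Rightarrow> bool" where
  "lies_over a b p \<longleftrightarrow> (\<forall>k. acoord u lam1 a k = amom p k \<and> bcoord u lam2 lam3 b k = bmom p k)"

lemma mu_zero_iff_lies_over: "mu_zero u lam1 lam2 lam3 p \<longleftrightarrow> (\<exists>a b. lies_over a b p)"
proof
  assume "mu_zero u lam1 lam2 lam3 p"
  then have "\<forall>X\<in>nfrak u. (\<chi> k. amom p k + lam1 k) \<bullet> X = 0"
    and "\<forall>X\<in>nfrak u. (\<chi> k. Re (bmom p k) + lam2 k) \<bullet> X = 0"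
    and "\<forall>X\<in>nfrak u. (\<chi> k. Im (bmom p k) + lam3 k) \<bullet> X = 0"
    unfolding mu_zero_iff_orthogonal by auto
  then obtain a ar ai where "\<forall>k. (\<chi> k. amom p k + lam1 k) $ k = a \<bullet> u k"
    and "\<forall>k. (\<chi> k. Re (bmom p k) + lam2 k) $ k = ar \<bullet> u k"
    and "\<forall>k. (\<chi> k. Im (bmom p k) + lam3 k) $ k = ai \<bullet> u k"
    unfolding orthogonal_nfrak_iff_transpose_image by blast
  then have "lies_over a (\<chi> j. Complex (ar$j) (ai$j)) p"
    unfolding lies_over_def bcoord_eq acoord_def by (simp add: complex_eq_iff diff_eq_eq)
  then show "\<exists>a b. lies_over a b p"
    by blast
next
  assume "\<exists>a b. lies_over a b p"
  then obtain a b where "lies_over a b p"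
    by blast
  then have "\<forall>k. (\<chi> k. amom p k + lam1 k) $ k = a \<bullet> u k"
    and "\<forall>k. (\<chi> k. Re (bmom p k) + lam2 k) $ k = (\<chi> j. Re (b$j)) \<bullet> u k"
    and "\<forall>k. (\<chi> k. Im (bmom p k) + lam3 k) $ k = (\<chi> j. Im (b$j)) \<bullet> u k"
    unfolding lies_over_def bcoord_eq acoord_def by (auto simp: complex_eq_iff) (metis diff_add_cancel)+
  then show "mu_zero u lam1 lam2 lam3 p"
    unfolding mu_zero_iff_orthogonal by (meson orthogonal_nfrak_iff_transpose_image)
qed

lemma Kset_iff_lies_over: "(a, b) \<in> Kset u lam1 lam2 lam3 \<longleftrightarrow> (\<exists>p. lies_over a b p)"
proof
  assume "(a, b) \<in> Kset u lam1 lam2 lam3"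
  then have "\<forall>k. \<exists>zw. (cmod (fst zw))\<^sup>2 / 2 + (cmod (snd zw))\<^sup>2 / 2 = acoord u lam1 a k \<and>
      \<i> * fst zw * cnj (snd zw) = bcoord u lam2 lam3 b k"
    unfolding Kset_def using exists_moment_preimage by fastforce
  then obtain g where "\<And>k. (cmod (fst (g k)))\<^sup>2 / 2 + (cmod (snd (g k)))\<^sup>2 / 2 = acoord u lam1 a k \<and>
      \<i> * fst (g k) * cnj (snd (g k)) = bcoord u lam2 lam3 b k"
    by metis
  then have "lies_over a b ((\<chi> k. fst (g k)), (\<chi> k. snd (g k)))"
    unfolding lies_over_def amom_def bmom_def by simp
  then show "\<exists>p. lies_over a b p"
    by blast
next
  assume "\<exists>p. lies_over a b p"
  then show "(a, b) \<in> Kset u lam1 lam2 lam3"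
    unfolding Kset_def lies_over_def using norm_bmom_le_amom by auto
qed

lemma Jset_lies_over:
  "lies_over a b p \<Longrightarrow> Jset u lam1 lam2 lam3 a b = {k. fst p $ k = 0 \<and> snd p $ k = 0}"
  unfolding Jset_def lies_over_def by (auto simp: amom_eq_0_iff bmom_def)

lemma Lset_lies_over:
  "lies_over a b p \<Longrightarrow> Lset u lam1 lam2 lam3 a b = {k. cmod (fst p $ k) = cmod (snd p $ k)}"
  unfolding Lset_def lies_over_def by (auto simp: amom_eq_norm_bmom_iff)

lemma Lambda_eq_Lambda_0_iff:
  "Lambda u lam1 lam2 lam3 a b (t1, t2, t3) = Lambda u lam1 lam2 lam3 a b (0, 0, 0) \<longleftrightarrow>
   (\<forall>k\<in>Lset u lam1 lam2 lam3 a b - Jset u lam1 lam2 lam3 a b.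
      bcoord u lam2 lam3 b k * of_real (t1$k) + of_real (acoord u lam1 a k) * Complex (t2$k) (t3$k) = 0)"
  unfolding Lambda_def restrict_def fun_eq_iff by (auto simp: Complex_eq_0)

lemma Lambda_eq_iff_diff:
  "Lambda u lam1 lam2 lam3 a b (t1, t2, t3) = Lambda u lam1 lam2 lam3 a b (s1, s2, s3) \<longleftrightarrow>
   Lambda u lam1 lam2 lam3 a b (t1 - s1, t2 - s2, t3 - s3) = Lambda u lam1 lam2 lam3 a b (0, 0, 0)"
  unfolding Lambda_def restrict_def fun_eq_iff by (auto simp: complex_eq_iff algebra_simps)

lemma Lambda_projR:
  "Lambda u lam1 lam2 lam3 a b (projR (- Jset u lam1 lam2 lam3 a b) X1,
     projR (- Jset u lam1 lam2 lam3 a b) X2, projR (- Jset u lam1 lam2 lam3 a b) X3) =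
   Lambda u lam1 lam2 lam3 a b (X1, X2, X3)"
  unfolding Lambda_def restrict_def projR_def by auto

lemma mem_Lambda_dom_iff:
  "(t1, t2, t3) \<in> Lambda_dom u lam1 lam2 lam3 a b \<longleftrightarrow>
   (\<exists>X1 X2 X3. {X1, X2, X3} \<subseteq> nL u (Lset u lam1 lam2 lam3 a b) \<and>
      (t1, t2, t3) = (projR (- Jset u lam1 lam2 lam3 a b) X1, projR (- Jset u lam1 lam2 lam3 a b) X2,
                      projR (- Jset u lam1 lam2 lam3 a b) X3))"
  unfolding Lambda_dom_def nLJ_def Let_def by blast

lemma IST_eq_0_iff_Lambda_kernel:
  assumes p: "lies_over a b p"
  defines "L \<equiv> Lset u lam1 lam2 lam3 a b"
  shows "Iop (vf X1 p) + Sop (vf X2 p) + Top (vf X3 p) = 0 \<longleftrightarrow>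
    (\<forall>k. k \<notin> L \<longrightarrow> X1$k = 0 \<and> X2$k = 0 \<and> X3$k = 0) \<and>
    Lambda u lam1 lam2 lam3 a b (X1, X2, X3) = Lambda u lam1 lam2 lam3 a b (0, 0, 0)"
proof -
  define J where "J = Jset u lam1 lam2 lam3 a b"
  have "IST_coord_eq (X1$k) (X2$k) (X3$k) (fst p $ k) (snd p $ k) \<longleftrightarrow>
      (k \<notin> L \<longrightarrow> X1$k = 0 \<and> X2$k = 0 \<and> X3$k = 0) \<and>
      (k \<in> L - J \<longrightarrow> bcoord u lam2 lam3 b k * of_real (X1$k) +
                      of_real (acoord u lam1 a k) * Complex (X2$k) (X3$k) = 0)" for k
  proof (cases "k \<in> L")
    case False
    then have "cmod (fst p $ k) \<noteq> cmod (snd p $ k)"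
      using Lset_lies_over[OF p] unfolding L_def by simp
    with False show ?thesis
      using IST_coord_eq_norm_neq by (auto simp: IST_coord_eq_def)
  next
    case True
    show ?thesis
    proof (cases "k \<in> J")
      case True
      with \<open>k \<in> L\<close> show ?thesis
        using Jset_lies_over[OF p] IST_coord_eq_0_0 unfolding J_def by simp
    next
      case False
      have "cmod (fst p $ k) = cmod (snd p $ k)"
        using \<open>k \<in> L\<close> Lset_lies_over[OF p] unfolding L_def by simp
      then have "IST_coord_eq (X1$k) (X2$k) (X3$k) (fst p $ k) (snd p $ k) \<longleftrightarrow>
          of_real (X1$k) * bmom p k + of_real (amom p k) * Complex (X2$k) (X3$k) = 0"
        unfolding amom_def bmom_def by (rule IST_coord_eq_norm_eq_iff)
      with \<open>k \<in> L\<close> False p show ?thesis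
        unfolding lies_over_def by (simp add: mult.commute)
    qed
  qed
  then show ?thesis
    unfolding IST_vf_eq_0_iff Lambda_eq_Lambda_0_iff L_def J_def by blast
qed

lemma condS_imp_inj_on_Lambda:
  assumes S: "condS u lam1 lam2 lam3" and K: "(a, b) \<in> Kset u lam1 lam2 lam3"
  shows "inj_on (Lambda u lam1 lam2 lam3 a b) (Lambda_dom u lam1 lam2 lam3 a b)"
proof (rule inj_onI, clarify)
  define L J where "L = Lset u lam1 lam2 lam3 a b" and "J = Jset u lam1 lam2 lam3 a b"
  obtain p where p: "lies_over a b p"
    using K Kset_iff_lies_over by blast
  fix t1 t2 t3 s1 s2 s3
  assume t_dom: "(t1, t2, t3) \<in> Lambda_dom u lam1 lam2 lam3 a b"
    and s_dom: "(s1, s2, s3) \<in> Lambda_dom u lam1 lam2 lam3 a b"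
    and eq: "Lambda u lam1 lam2 lam3 a b (t1, t2, t3) = Lambda u lam1 lam2 lam3 a b (s1, s2, s3)"
  from t_dom obtain X1 X2 X3 where X: "{X1, X2, X3} \<subseteq> nL u L"
    and t: "t1 = projR (- J) X1" "t2 = projR (- J) X2" "t3 = projR (- J) X3"
    unfolding mem_Lambda_dom_iff L_def[symmetric] J_def[symmetric] by blast
  from s_dom obtain Y1 Y2 Y3 where Y: "{Y1, Y2, Y3} \<subseteq> nL u L"
    and s: "s1 = projR (- J) Y1" "s2 = projR (- J) Y2" "s3 = projR (- J) Y3"
    unfolding mem_Lambda_dom_iff L_def[symmetric] J_def[symmetric] by blast
  define D1 D2 D3 where "D1 = X1 - Y1" and "D2 = X2 - Y2" and "D3 = X3 - Y3"
  have D: "D1 \<in> nL u L" "D2 \<in> nL u L" "D3 \<in> nL u L"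
    using X Y unfolding D1_def D2_def D3_def by (simp_all add: subspace_diff[OF subspace_nL])
  then have "\<forall>k. k \<notin> L \<longrightarrow> D1$k = 0 \<and> D2$k = 0 \<and> D3$k = 0"
    unfolding nL_def by simp
  moreover have "Lambda u lam1 lam2 lam3 a b (D1, D2, D3) = Lambda u lam1 lam2 lam3 a b (0, 0, 0)"
  proof -
    have "Lambda u lam1 lam2 lam3 a b (t1 - s1, t2 - s2, t3 - s3) = Lambda u lam1 lam2 lam3 a b (0, 0, 0)"
      using eq Lambda_eq_iff_diff by blast
    then show ?thesis
      unfolding t s projR_diff J_def Lambda_projR D1_def D2_def D3_def .
  qed
  ultimately have "Iop (vf D1 p) + Sop (vf D2 p) + Top (vf D3 p) = 0"
    unfolding IST_eq_0_iff_Lambda_kernel[OF p] L_def by blast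
  moreover have "mu_zero u lam1 lam2 lam3 p"
    using p mu_zero_iff_lies_over by blast
  moreover have "D1 \<in> nfrak u" "D2 \<in> nfrak u" "D3 \<in> nfrak u"
    using D unfolding nL_def by simp_all
  ultimately have "(D1, D2, D3) = (0, 0, 0)"
    using S unfolding condS_def by blast
  then show "t1 = s1 \<and> (t2, t3) = (s2, s3)"
    unfolding t s D1_def D2_def D3_def by simp
qed

lemma inj_on_Lambda_imp_condS:
  assumes locfree: "locally_free u lam1 lam2 lam3"
    and inj: "\<forall>(a, b) \<in> Kset u lam1 lam2 lam3.
                inj_on (Lambda u lam1 lam2 lam3 a b) (Lambda_dom u lam1 lam2 lam3 a b)"
  shows "condS u lam1 lam2 lam3"
  unfolding condS_def
proof
  assume "\<exists>p. mu_zero u lam1 lam2 lam3 p \<and>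
          (\<exists>X1\<in>nfrak u. \<exists>X2\<in>nfrak u. \<exists>X3\<in>nfrak u. (X1, X2, X3) \<noteq> (0, 0, 0) \<and>
              Iop (vf X1 p) + Sop (vf X2 p) + Top (vf X3 p) = 0)"
  then obtain p X1 X2 X3 where mu: "mu_zero u lam1 lam2 lam3 p"
    and X: "X1 \<in> nfrak u" "X2 \<in> nfrak u" "X3 \<in> nfrak u" and nonzero: "(X1, X2, X3) \<noteq> (0, 0, 0)"
    and IST: "Iop (vf X1 p) + Sop (vf X2 p) + Top (vf X3 p) = 0"
    by blast
  obtain a b where p: "lies_over a b p"
    using mu mu_zero_iff_lies_over by blast
  define L J where "L = Lset u lam1 lam2 lam3 a b" and "J = Jset u lam1 lam2 lam3 a b"
  define t where "t = (projR (- J) X1, projR (- J) X2, projR (- J) X3)"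
  have "\<forall>k. k \<notin> L \<longrightarrow> X1$k = 0 \<and> X2$k = 0 \<and> X3$k = 0"
    and Lambda_X: "Lambda u lam1 lam2 lam3 a b (X1, X2, X3) = Lambda u lam1 lam2 lam3 a b (0, 0, 0)"
    using IST unfolding IST_eq_0_iff_Lambda_kernel[OF p] L_def by blast+
  then have "{X1, X2, X3} \<subseteq> nL u L"
    using X unfolding nL_def by blast
  then have "t \<in> Lambda_dom u lam1 lam2 lam3 a b"
    unfolding t_def mem_Lambda_dom_iff L_def[symmetric] J_def[symmetric] by blast
  moreover have "(0, 0, 0) \<in> Lambda_dom u lam1 lam2 lam3 a b"
  proof -
    have "{0, 0, 0} \<subseteq> nL u L" "projR (- J) 0 = 0"
      using subspace_nL subspace_0 by (auto simp: projR_def vec_eq_iff)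
    then show ?thesis
      unfolding mem_Lambda_dom_iff L_def[symmetric] J_def[symmetric] by metis
  qed
  moreover have "inj_on (Lambda u lam1 lam2 lam3 a b) (Lambda_dom u lam1 lam2 lam3 a b)"
    using inj p Kset_iff_lies_over by blast
  moreover have "Lambda u lam1 lam2 lam3 a b t = Lambda u lam1 lam2 lam3 a b (0, 0, 0)"
    using Lambda_X unfolding t_def J_def Lambda_projR .
  ultimately have "t = (0, 0, 0)"
    by (simp add: inj_on_def)
  \<comment> \<open>so X vanishes off J, while p vanishes on J\<close>
  then have "\<forall>k. k \<notin> J \<longrightarrow> X1$k = 0 \<and> X2$k = 0 \<and> X3$k = 0"
    unfolding t_def projR_def by (simp add: vec_eq_iff) meson
  then have "vf X1 p = 0" "vf X2 p = 0" "vf X3 p = 0"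
    using Jset_lies_over[OF p] unfolding J_def vf_def by (auto simp: prod_eq_iff vec_eq_iff)
  with locfree mu X nonzero show False
    unfolding locally_free_def by blast
qed

end

theorem proposition5p9:
  fixes u :: "'d::finite \<Rightarrow> real^'n::finite"
    and lam1 lam2 lam3 :: "'d \<Rightarrow> real"
  assumes integral: "\<forall>k j. u k $ j \<in> \<int>"
    and spanning: "span (range u) = UNIV"
    and locfree: "locally_free u lam1 lam2 lam3"
  shows "condS u lam1 lam2 lam3 \<longleftrightarrow>
           (\<forall>(a, b) \<in> Kset u lam1 lam2 lam3.
              inj_on (Lambda u lam1 lam2 lam3 a b) (Lambda_dom u lam1 lam2 lam3 a b))"
  using condS_imp_inj_on_Lambda inj_on_Lambda_imp_condS[OF locfree] by blast

end
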